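(* Let $X$ be a locally compact space and $\kappa$ an infinite cardinal. Then $\mathcal{K}(X)$ has calibre $(\kappa^+,\omega)$ if and only if $e(\mathcal{K}(X))\le\kappa$.
   Context: All spaces are Tychonoff. $\mathcal{K}(X)$ is the set of compact subsets of $X$ ordered by inclusion and equipped with the Vietoris topology. A directed set $P$ has calibre $(\mu,\lambda)$ if every subset of $P$ of size $\mu$ contains a subset of size $\lambda$ with an upper bound in $P$. The extent $e(Y)$ is the supremum of cardinalities of closed discrete subsets of $Y$. *)

theory Defs
  imports "HOL-Analysis.Analysis"
begin

text \<open>Compact subsets of X (including the empty set), ordered by inclusion.\<close>
definition compacts :: "'a topology \<Rightarrow> 'a set set" where
  "compacts X = {K. compactin X K}"

definition vietoris :: "'a topology \<Rightarrow> 'a set topology" where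
  "vietoris X = topology_generated_by
     ({{K \<in> compacts X. K \<subseteq> U} | U. openin X U} \<union>
      {{K \<in> compacts X. K \<inter> U \<noteq> {}} | U. openin X U})"

text \<open>Calibre \<open>(\<kappa>\<^sup>+,\<omega>)\<close> of a directed set (P, \<subseteq>) with \<open>\<kappa> = |C|\<close>: every subset of size
  \<open>\<kappa>\<^sup>+\<close> contains a countably infinite subset with an upper bound in P.\<close>
definition calibre_succ_omega :: "'b set set \<Rightarrow> 'k set \<Rightarrow> bool" where
  "calibre_succ_omega P C \<longleftrightarrow>
     (\<forall>S \<subseteq> P. ordIso2 (card_of S) (cardSuc (card_of C)) \<longrightarrow>
        (\<exists>T \<subseteq> S. infinite T \<and> countable T \<and> (\<exists>u \<in> P. \<forall>t \<in> T. t \<subseteq> u)))"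

definition closed_discrete_in :: "'a topology \<Rightarrow> 'a set \<Rightarrow> bool" where
  "closed_discrete_in Y D \<longleftrightarrow> closedin Y D \<and>
     (\<forall>d \<in> D. \<exists>U. openin Y U \<and> U \<inter> D = {d})"

definition extent_le :: "'a topology \<Rightarrow> 'k set \<Rightarrow> bool" where
  "extent_le Y C \<longleftrightarrow> (\<forall>D. closed_discrete_in Y D \<longrightarrow> ordLeq2 (card_of D) (card_of C))"

end

theory Submission
  imports Defs
begin

text \<open>A family \<open>S\<close> of compact sets is closed discrete in the Vietoris topology exactly when
  every compact \<open>L\<close> contains only finitely many members of \<open>S\<close>. One direction holds because
  \<open>{K. K \<subseteq> L}\<close> is Vietoris compact (Alexander's subbase theorem). For the other, local
  compactness gives each compact \<open>K\<close> an open \<open>U \<supseteq> K\<close> inside a compact \<open>L\<close>; the Vietoris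
  neighbourhood \<open>{K'. K' \<subseteq> U}\<close> of \<open>K\<close> then meets \<open>S\<close> finitely, and since the Vietoris topology
  is \<open>T\<^sub>1\<close> it can be shrunk to meet \<open>S\<close> at most in \<open>K\<close>. Hence a family of size \<open>\<kappa>\<^sup>+\<close> has an
  infinite countable subfamily bounded by a compact set iff it is not closed discrete, and a closed
  discrete set of size \<open>> \<kappa>\<close> contains one of size \<open>\<kappa>\<^sup>+\<close>.\<close>

lemma ex_subset_ordIso_card_order:
  assumes "Card_order r" and "ordLeq2 r (card_of A)"
  obtains B where "B \<subseteq> A" and "ordIso2 (card_of B) r"
proof -
  have Field_r: "ordIso2 (card_of (Field r)) r"
    using assms(1) by (rule card_of_Field_ordIso)
  have "ordLeq2 (card_of (Field r)) (card_of A)"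
    using ordIso_ordLeq_trans[OF Field_r assms(2)] .
  then obtain B where "B \<subseteq> A" and "ordIso2 (card_of (Field r)) (card_of B)"
    using internalize_card_of_ordLeq2[THEN iffD1] by blast
  moreover from this(2) have "ordIso2 (card_of B) r"
    using ordIso_transitive[OF ordIso_symmetric Field_r] by blast
  ultimately show thesis
    using that by blast
qed

lemma ex_subset_card_of_cardSuc:
  assumes "\<not> ordLeq2 (card_of D) (card_of C)"
  obtains S where "S \<subseteq> D" and "ordIso2 (card_of S) (cardSuc (card_of C))"
proof -
  have "ordLess2 (card_of C) (card_of D)"
    using assms not_ordLeq_iff_ordLess[OF card_of_Well_order card_of_Well_order] by auto
  then have "ordLeq2 (cardSuc (card_of C)) (card_of D)"
    using cardSuc_least[OF card_of_Card_order card_of_Card_order] by auto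
  then show thesis
    using that ex_subset_ordIso_card_order[OF cardSuc_Card_order[OF card_of_Card_order]] by auto
qed

lemma closed_discrete_in_iff_isolating_nbhds:
  "closed_discrete_in Y S \<longleftrightarrow>
     S \<subseteq> topspace Y \<and> (\<forall>x \<in> topspace Y. \<exists>W. openin Y W \<and> x \<in> W \<and> W \<inter> S \<subseteq> {x})"
  (is "?lhs \<longleftrightarrow> ?rhs")
proof
  assume ?lhs
  then have closed: "closedin Y S" and isolated: "\<And>x. x \<in> S \<Longrightarrow> \<exists>W. openin Y W \<and> W \<inter> S = {x}"
    unfolding closed_discrete_in_def by simp_all
  have "\<exists>W. openin Y W \<and> x \<in> W \<and> W \<inter> S \<subseteq> {x}" if x: "x \<in> topspace Y" for x
  proof (cases "x \<in> S")
    case True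
    then obtain W where "openin Y W" "W \<inter> S = {x}"
      using isolated[OF True] by auto
    then show ?thesis
      by (intro exI[of _ W]) auto
  next
    case False
    have "openin Y (topspace Y - S)"
      using closed by (simp add: closedin_def)
    then show ?thesis
      using x False by (intro exI[of _ "topspace Y - S"]) auto
  qed
  then show ?rhs
    using closedin_subset[OF closed] by simp
next
  assume ?rhs
  then have sub: "S \<subseteq> topspace Y"
    and nbhd: "\<And>x. x \<in> topspace Y \<Longrightarrow> \<exists>W. openin Y W \<and> x \<in> W \<and> W \<inter> S \<subseteq> {x}"
    by simp_all
  have "openin Y (topspace Y - S)"
  proof (subst openin_subopen, intro ballI)
    fix x assume x: "x \<in> topspace Y - S"
    then obtain W where W: "openin Y W" "x \<in> W" "W \<inter> S \<subseteq> {x}"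
      using nbhd by auto
    then have "W \<subseteq> topspace Y - S"
      using x openin_subset by auto
    then show "\<exists>T. openin Y T \<and> x \<in> T \<and> T \<subseteq> topspace Y - S"
      using W by auto
  qed
  then have "closedin Y S"
    using sub by (simp add: closedin_def)
  moreover have "\<exists>W. openin Y W \<and> W \<inter> S = {x}" if x: "x \<in> S" for x
  proof -
    obtain W where "openin Y W" "x \<in> W" "W \<inter> S \<subseteq> {x}"
      using nbhd[of x] x sub by auto
    then show ?thesis
      using x by (intro exI[of _ W]) auto
  qed
  ultimately show ?lhs
    unfolding closed_discrete_in_def by simp
qed

lemma closed_discrete_in_subset:
  "closed_discrete_in Y D \<Longrightarrow> S \<subseteq> D \<Longrightarrow> closed_discrete_in Y S"
  unfolding closed_discrete_in_iff_isolating_nbhds by (meson Int_mono order_refl order_trans)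

lemma finite_closed_discrete_in_Int_compactin:
  assumes "closed_discrete_in Y S" and "compactin Y A"
  shows "finite (S \<inter> A)"
proof -
  obtain W where W: "\<And>x. x \<in> topspace Y \<Longrightarrow> openin Y (W x) \<and> x \<in> W x \<and> W x \<inter> S \<subseteq> {x}"
    using assms(1) unfolding closed_discrete_in_iff_isolating_nbhds by metis
  have A: "A \<subseteq> topspace Y"
    using assms(2) by (rule compactin_subset_topspace)
  then have "A \<subseteq> \<Union>(W ` A)"
    using W by auto
  moreover have "\<forall>V \<in> W ` A. openin Y V"
    using A W by auto
  ultimately obtain \<F> where "finite \<F>" "\<F> \<subseteq> W ` A" "A \<subseteq> \<Union>\<F>"
    using assms(2) unfolding compactin_def by meson
  then obtain F where F: "finite F" "F \<subseteq> A" "A \<subseteq> \<Union>(W ` F)"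
    by (metis finite_subset_image)
  have "S \<inter> A \<subseteq> F"
  proof
    fix y assume y: "y \<in> S \<inter> A"
    then obtain x where x: "x \<in> F" "y \<in> W x"
      using F(3) by auto
    then have "W x \<inter> S \<subseteq> {x}"
      using F(2) A W by auto
    then show "y \<in> F"
      using x y by auto
  qed
  then show ?thesis
    using F(1) by (rule finite_subset)
qed

lemma closed_discrete_in_if_finite_nbhds:
  assumes "t1_space Y" and "S \<subseteq> topspace Y"
    and "\<And>x. x \<in> topspace Y \<Longrightarrow> \<exists>W. openin Y W \<and> x \<in> W \<and> finite (W \<inter> S)"
  shows "closed_discrete_in Y S"
  unfolding closed_discrete_in_iff_isolating_nbhds
proof (intro conjI ballI)
  fix x assume x: "x \<in> topspace Y"
  then obtain W where W: "openin Y W" "x \<in> W" "finite (W \<inter> S)"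
    using assms(3) by auto
  have "closedin Y (W \<inter> S - {x})"
    using assms(1,2) W(3) unfolding t1_space_closedin_finite by auto
  then have "openin Y (W - (W \<inter> S - {x}))"
    by (rule openin_diff[OF W(1)])
  then show "\<exists>W'. openin Y W' \<and> x \<in> W' \<and> W' \<inter> S \<subseteq> {x}"
    using W(2) by (intro exI[of _ "W - (W \<inter> S - {x})"]) auto
qed (fact assms(2))

lemma compactin_diff_openin:
  assumes "compactin X L" and "openin X U"
  shows "compactin X (L - U)"
proof -
  have "L - U = (topspace X - U) \<inter> L"
    using compactin_subset_topspace[OF assms(1)] by auto
  then show ?thesis
    using assms by (simp add: closed_Int_compactin closedin_diff)
qed

lemma topology_generated_by_eq_subbase:
  "topology_generated_by \<B> =
     topology (arbitrary union_of (finite intersection_of (\<lambda>x. x \<in> \<B>) relative_to \<Union>\<B>))"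
proof -
  have "topology_generated_by \<B> = topology (arbitrary union_of (finite' intersection_of (\<lambda>x. x \<in> \<B>)))"
    by (simp add: generate_topology_on_eq)
  also have "\<dots> = topology (arbitrary union_of (finite intersection_of (\<lambda>x. x \<in> \<B>) relative_to \<Union>\<B>))"
  proof (rule topology_bases_eq)
    fix U x assume "(finite' intersection_of (\<lambda>x. x \<in> \<B>)) U" and "x \<in> U"
    then obtain F where F: "finite F" "F \<noteq> {}" "F \<subseteq> \<B>" "\<Inter>F = U"
      unfolding intersection_of_def by auto
    then have "(finite intersection_of (\<lambda>x. x \<in> \<B>) relative_to \<Union>\<B>) U"
      unfolding relative_to_def intersection_of_def by (intro exI[of _ U]) auto
    then show "\<exists>V. (finite intersection_of (\<lambda>x. x \<in> \<B>) relative_to \<Union>\<B>) V \<and> x \<in> V \<and> V \<subseteq> U"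
      using \<open>x \<in> U\<close> by blast
  next
    fix V x assume "(finite intersection_of (\<lambda>x. x \<in> \<B>) relative_to \<Union>\<B>) V" and x: "x \<in> V"
    then obtain F where F: "finite F" "F \<subseteq> \<B>" "V = \<Union>\<B> \<inter> \<Inter>F"
      unfolding intersection_of_def relative_to_def by auto
    show "\<exists>U. (finite' intersection_of (\<lambda>x. x \<in> \<B>)) U \<and> x \<in> U \<and> U \<subseteq> V"
    proof (cases "F = {}")
      case True
      then obtain b where "b \<in> \<B>" "x \<in> b"
        using x F by auto
      then show ?thesis
        using F True unfolding intersection_of_def by (intro exI[of _ b]) (auto intro!: exI[of _ "{b}"])
    next
      case False
      then show ?thesis
        using F x unfolding intersection_of_def by (intro exI[of _ "\<Inter>F"]) auto
    qed
  qed
  finally show ?thesis .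
qed

lemma subtopology_subbase:
  assumes "S \<subseteq> U"
  shows "subtopology (topology (arbitrary union_of (finite intersection_of P relative_to U))) S
       = topology (arbitrary union_of (finite intersection_of P relative_to S))"
proof -
  let ?Q = "arbitrary union_of (finite intersection_of P relative_to U)"
  have "(\<lambda>T. \<exists>S'. T = S' \<inter> S \<and> openin (topology ?Q) S') = (?Q relative_to S)"
    unfolding openin_subbase by (auto simp: relative_to_def Int_commute)
  also have "\<dots> = arbitrary union_of (finite intersection_of P relative_to S)"
    using assms by (simp add: arbitrary_union_of_relative_to Int_absorb1)
  finally show ?thesis
    unfolding subtopology_def by simp
qed

definition vietoris_subbase :: "'a topology \<Rightarrow> 'a set set set" where
  "vietoris_subbase X =
     {{K \<in> compacts X. K \<subseteq> U} | U. openin X U} \<union> {{K \<in> compacts X. K \<inter> U \<noteq> {}} | U. openin X U}"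

lemma vietoris_eq_topology_generated_by: "vietoris X = topology_generated_by (vietoris_subbase X)"
  by (simp add: vietoris_def vietoris_subbase_def)

lemma Union_vietoris_subbase: "\<Union>(vietoris_subbase X) = compacts X"
proof -
  have "{K \<in> compacts X. K \<subseteq> topspace X} = compacts X"
    by (auto simp: compacts_def dest: compactin_subset_topspace)
  moreover have "{K \<in> compacts X. K \<subseteq> topspace X} \<in> vietoris_subbase X"
    unfolding vietoris_subbase_def using openin_topspace by blast
  moreover have "\<Union>(vietoris_subbase X) \<subseteq> compacts X"
    by (auto simp: vietoris_subbase_def)
  ultimately show ?thesis
    by blast
qed

lemma topspace_vietoris [simp]: "topspace (vietoris X) = compacts X"
  by (simp add: vietoris_eq_topology_generated_by Union_vietoris_subbase)

lemma openin_vietoris_subset: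
  "openin X U \<Longrightarrow> openin (vietoris X) {K \<in> compacts X. K \<subseteq> U}"
  unfolding vietoris_eq_topology_generated_by
  by (rule topology_generated_by_Basis) (auto simp: vietoris_subbase_def)

lemma openin_vietoris_meets:
  "openin X U \<Longrightarrow> openin (vietoris X) {K \<in> compacts X. K \<inter> U \<noteq> {}}"
  unfolding vietoris_eq_topology_generated_by
  by (rule topology_generated_by_Basis) (auto simp: vietoris_subbase_def)

lemma subtopology_vietoris:
  assumes "S \<subseteq> compacts X"
  shows "subtopology (vietoris X) S =
     topology (arbitrary union_of (finite intersection_of (\<lambda>x. x \<in> vietoris_subbase X) relative_to S))"
  using subtopology_subbase[OF assms[folded Union_vietoris_subbase]]
  by (simp add: vietoris_eq_topology_generated_by topology_generated_by_eq_subbase)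

lemma t1_space_vietoris:
  assumes "Hausdorff_space X"
  shows "t1_space (vietoris X)"
  unfolding t1_space_def topspace_vietoris
proof (intro ballI impI)
  fix K K' assume K: "K \<in> compacts X" and K': "K' \<in> compacts X" and "K \<noteq> K'"
  have KX: "K \<subseteq> topspace X" and K'X: "K' \<subseteq> topspace X"
    using K K' by (auto simp: compacts_def dest: compactin_subset_topspace)
  show "\<exists>U. openin (vietoris X) U \<and> K \<in> U \<and> K' \<notin> U"
  proof (cases "K \<subseteq> K'")
    case False
    then obtain x where x: "x \<in> K" "x \<notin> K'"
      by auto
    have "closedin X K'"
      using K' assms by (simp add: compacts_def compactin_imp_closedin)
    then have "openin (vietoris X) {L \<in> compacts X. L \<inter> (topspace X - K') \<noteq> {}}"
      by (intro openin_vietoris_meets) (simp add: closedin_def)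
    moreover have "K \<in> {L \<in> compacts X. L \<inter> (topspace X - K') \<noteq> {}}"
      using K KX x by blast
    ultimately show ?thesis
      by blast
  next
    case True
    then obtain x where x: "x \<in> K'" "x \<notin> K"
      using \<open>K \<noteq> K'\<close> by auto
    have "closedin X {x}"
      using x K'X Hausdorff_imp_t1_space[OF assms] by (simp add: closedin_t1_singleton subset_iff)
    then have "openin (vietoris X) {L \<in> compacts X. L \<subseteq> topspace X - {x}}"
      by (intro openin_vietoris_subset) (simp add: closedin_def)
    moreover have "K \<in> {L \<in> compacts X. L \<subseteq> topspace X - {x}}"
      using K KX x by blast
    ultimately show ?thesis
      using x by blast
  qed
qed

lemma vietoris_subbase_finite_subcover:
  assumes L: "compactin X L" and \<C>: "\<C> \<subseteq> vietoris_subbase X"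
    and cover: "{K \<in> compacts X. K \<subseteq> L} \<subseteq> \<Union>\<C>"
  shows "\<exists>\<C>'. finite \<C>' \<and> \<C>' \<subseteq> \<C> \<and> {K \<in> compacts X. K \<subseteq> L} \<subseteq> \<Union>\<C>'"
proof -
  define meets where "meets W = {K \<in> compacts X. K \<inter> W \<noteq> {}}" for W
  define \<W> where "\<W> = {W. openin X W \<and> meets W \<in> \<C>}"
  have "compactin X (L - \<Union>\<W>)"
    using L by (rule compactin_diff_openin) (auto simp: \<W>_def)
  then obtain c where c: "c \<in> \<C>" "L - \<Union>\<W> \<in> c"
    using cover by (auto simp: compacts_def)
  \<comment> \<open>\<open>L - \<Union>\<W>\<close> misses every \<open>W \<in> \<W>\<close>, so \<open>c\<close> must be of the form \<open>{K. K \<subseteq> U}\<close>.\<close>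
  obtain U where U: "openin X U" "{K \<in> compacts X. K \<subseteq> U} \<in> \<C>" "L - \<Union>\<W> \<subseteq> U"
  proof -
    consider U where "openin X U" "c = {K \<in> compacts X. K \<subseteq> U}" | W where "openin X W" "c = meets W"
      using c(1) \<C> unfolding vietoris_subbase_def meets_def by auto
    then show thesis
    proof cases
      case 1
      then show thesis
        using that c by auto
    next
      case 2
      then have "W \<in> \<W>"
        using c(1) by (auto simp: \<W>_def)
      then show thesis
        using 2 c(2) by (auto simp: meets_def)
    qed
  qed
  have "compactin X (L - U)"
    using L U(1) by (rule compactin_diff_openin)
  moreover have "L - U \<subseteq> \<Union>\<W>"
    using U(3) by auto
  ultimately obtain F where F: "finite F" "F \<subseteq> \<W>" "L - U \<subseteq> \<Union>F"
    unfolding compactin_def by (metis (no_types, lifting) \<W>_def mem_Collect_eq)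
  let ?\<C>' = "insert {K \<in> compacts X. K \<subseteq> U} (meets ` F)"
  have "{K \<in> compacts X. K \<subseteq> L} \<subseteq> \<Union>?\<C>'"
  proof
    fix K assume K: "K \<in> {K \<in> compacts X. K \<subseteq> L}"
    show "K \<in> \<Union>?\<C>'"
    proof (cases "K \<subseteq> U")
      case False
      then obtain x W where "x \<in> K" "W \<in> F" "x \<in> W"
        using False K F(3) by blast
      then show ?thesis
        using K by (auto simp: meets_def)
    qed (use K in auto)
  qed
  moreover have "?\<C>' \<subseteq> \<C>"
    using U(2) F(2) by (auto simp: \<W>_def)
  ultimately show ?thesis
    using F(1) by (intro exI[of _ ?\<C>']) auto
qed

lemma compactin_vietoris_subsets:
  assumes "compactin X L"
  shows "compactin (vietoris X) {K \<in> compacts X. K \<subseteq> L}"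
proof -
  have "compact_space (subtopology (vietoris X) {K \<in> compacts X. K \<subseteq> L})"
  proof (rule Alexander_subbase_alt)
    show "{K \<in> compacts X. K \<subseteq> L} \<subseteq> \<Union>(vietoris_subbase X)"
      by (simp add: Union_vietoris_subbase)
  qed (auto simp: subtopology_vietoris intro: vietoris_subbase_finite_subcover[OF assms])
  then show ?thesis
    by (simp add: compactin_subspace)
qed

lemma closed_discrete_in_vietoris_iff:
  assumes "Hausdorff_space X" and "locally_compact_space X" and "S \<subseteq> compacts X"
  shows "closed_discrete_in (vietoris X) S \<longleftrightarrow> (\<forall>L. compactin X L \<longrightarrow> finite {K \<in> S. K \<subseteq> L})"
proof
  assume S: "closed_discrete_in (vietoris X) S"
  show "\<forall>L. compactin X L \<longrightarrow> finite {K \<in> S. K \<subseteq> L}"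
  proof (intro allI impI)
    fix L assume "compactin X L"
    then have "finite (S \<inter> {K \<in> compacts X. K \<subseteq> L})"
      by (rule finite_closed_discrete_in_Int_compactin[OF S compactin_vietoris_subsets])
    moreover have "{K \<in> S. K \<subseteq> L} = S \<inter> {K \<in> compacts X. K \<subseteq> L}"
      using assms(3) by auto
    ultimately show "finite {K \<in> S. K \<subseteq> L}"
      by simp
  qed
next
  assume fin: "\<forall>L. compactin X L \<longrightarrow> finite {K \<in> S. K \<subseteq> L}"
  show "closed_discrete_in (vietoris X) S"
  proof (rule closed_discrete_in_if_finite_nbhds)
    show "t1_space (vietoris X)"
      using assms(1) by (rule t1_space_vietoris)
    show "S \<subseteq> topspace (vietoris X)"
      using assms(3) by simp
  next
    fix K assume K: "K \<in> topspace (vietoris X)"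
    then obtain U L where UL: "openin X U" "compactin X L" "K \<subseteq> U" "U \<subseteq> L"
      using assms(1,2) locally_compact_space_compact_closed_compact by (metis compacts_def
          mem_Collect_eq topspace_vietoris)
    have "{K' \<in> compacts X. K' \<subseteq> U} \<inter> S \<subseteq> {K \<in> S. K \<subseteq> L}"
      using UL(4) by auto
    moreover have "finite {K \<in> S. K \<subseteq> L}"
      using fin UL(2) by simp
    ultimately have "finite ({K' \<in> compacts X. K' \<subseteq> U} \<inter> S)"
      by (rule finite_subset)
    moreover have "openin (vietoris X) {K' \<in> compacts X. K' \<subseteq> U}"
      using UL(1) by (rule openin_vietoris_subset)
    moreover have "K \<in> {K' \<in> compacts X. K' \<subseteq> U}"
      using K UL(3) by simp
    ultimately show "\<exists>W. openin (vietoris X) W \<and> K \<in> W \<and> finite (W \<inter> S)"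
      by blast
  qed
qed

lemma not_closed_discrete_in_vietoris_iff:
  assumes "Hausdorff_space X" and "locally_compact_space X" and "S \<subseteq> compacts X"
  shows "\<not> closed_discrete_in (vietoris X) S \<longleftrightarrow>
           (\<exists>T \<subseteq> S. infinite T \<and> countable T \<and> (\<exists>L \<in> compacts X. \<forall>K \<in> T. K \<subseteq> L))"
proof
  assume "\<not> closed_discrete_in (vietoris X) S"
  then obtain L where L: "compactin X L" "infinite {K \<in> S. K \<subseteq> L}"
    using closed_discrete_in_vietoris_iff[OF assms] by auto
  then obtain T where "T \<subseteq> {K \<in> S. K \<subseteq> L}" "countable T" "infinite T"
    using infinite_countable_subset' by meson
  then show "\<exists>T \<subseteq> S. infinite T \<and> countable T \<and> (\<exists>L \<in> compacts X. \<forall>K \<in> T. K \<subseteq> L)"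
    using L(1) by (intro exI[of _ T]) (auto simp: compacts_def)
next
  assume "\<exists>T \<subseteq> S. infinite T \<and> countable T \<and> (\<exists>L \<in> compacts X. \<forall>K \<in> T. K \<subseteq> L)"
  then obtain T L where T: "T \<subseteq> S" "infinite T" and L: "L \<in> compacts X" "\<forall>K \<in> T. K \<subseteq> L"
    by auto
  have "T \<subseteq> {K \<in> S. K \<subseteq> L}"
    using T(1) L(2) by auto
  then have "infinite {K \<in> S. K \<subseteq> L}"
    using T(2) finite_subset by auto
  then show "\<not> closed_discrete_in (vietoris X) S"
    using L(1) closed_discrete_in_vietoris_iff[OF assms] by (auto simp: compacts_def)
qed

theorem mainTheorem6:
  fixes X :: "'a topology" and C :: "'k set"
  assumes "Hausdorff_space X" and "completely_regular_space X"
    and "locally_compact_space X"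
    and "infinite C"
  shows "calibre_succ_omega (compacts X) C \<longleftrightarrow> extent_le (vietoris X) C"
proof
  assume calibre: "calibre_succ_omega (compacts X) C"
  show "extent_le (vietoris X) C"
    unfolding extent_le_def
  proof (intro allI impI)
    fix D assume D: "closed_discrete_in (vietoris X) D"
    show "ordLeq2 (card_of D) (card_of C)"
    proof (rule ccontr)
      assume "\<not> ordLeq2 (card_of D) (card_of C)"
      then obtain S where S: "S \<subseteq> D" "ordIso2 (card_of S) (cardSuc (card_of C))"
        by (rule ex_subset_card_of_cardSuc)
      have S_compacts: "S \<subseteq> compacts X"
        using S(1) D closedin_subset by (fastforce simp: closed_discrete_in_def)
      have "\<exists>T \<subseteq> S. infinite T \<and> countable T \<and> (\<exists>L \<in> compacts X. \<forall>K \<in> T. K \<subseteq> L)"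
        using calibre[unfolded calibre_succ_omega_def, rule_format, OF S_compacts S(2)] .
      then have "\<not> closed_discrete_in (vietoris X) S"
        using not_closed_discrete_in_vietoris_iff[OF assms(1,3) S_compacts] by simp
      moreover have "closed_discrete_in (vietoris X) S"
        using D S(1) by (rule closed_discrete_in_subset)
      ultimately show False
        by contradiction
    qed
  qed
next
  assume extent: "extent_le (vietoris X) C"
  show "calibre_succ_omega (compacts X) C"
    unfolding calibre_succ_omega_def
  proof (intro allI impI)
    fix S assume S: "S \<subseteq> compacts X" "ordIso2 (card_of S) (cardSuc (card_of C))"
    have less: "ordLess2 (card_of C) (card_of S)"
      using ordLess_ordIso_trans[OF cardSuc_greater[OF card_of_Card_order] ordIso_symmetric[OF S(2)]] .
    have "\<not> closed_discrete_in (vietoris X) S"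
      using extent[unfolded extent_le_def, rule_format, of S] not_ordLess_ordLeq[OF less] by blast
    then show "\<exists>T \<subseteq> S. infinite T \<and> countable T \<and> (\<exists>L \<in> compacts X. \<forall>K \<in> T. K \<subseteq> L)"
      using not_closed_discrete_in_vietoris_iff[OF assms(1,3) S(1)] by simp
  qed
qed

end
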